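(* Let $M$ be a matroid. If $M$ has two distinct bases that are disjoint, or its dual $M^\star$ has two distinct bases that are disjoint, then $M$ has the Borsuk property.
   Context: All matroids are finite. For a matroid $M$, $\mathcal{B}(M)$ denotes its set of bases, and the distance between two bases $B,B'$ is $|B\triangle B'|$ (symmetric difference); $\operatorname{diam}$ denotes the diameter with respect to this distance. The Borsuk number $f(M)$ is the minimum number of parts in a partition of $\mathcal{B}(M)$ in which every part has diameter strictly smaller than $\operatorname{diam}(\mathcal{B}(M))$; if $M$ has exactly one basis, $f(M):=+\infty$. If $M$ has $n$ elements and $c$ connected components, $M$ has the Borsuk property if $f(M)\le n-c+1$. *)

theory Defs
  imports Main "HOL-Library.Disjoint_Sets" "HOL-Library.Extended_Nat"
begin

definition matroid :: "'a set \<Rightarrow> 'a set set \<Rightarrow> bool" where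
  "matroid E Bs \<longleftrightarrow> finite E \<and> Bs \<noteq> {} \<and> (\<forall>B\<in>Bs. B \<subseteq> E) \<and>
     (\<forall>B1\<in>Bs. \<forall>B2\<in>Bs. \<forall>x\<in>B1 - B2. \<exists>y\<in>B2 - B1. insert y (B1 - {x}) \<in> Bs)"

definition dual_bases :: "'a set \<Rightarrow> 'a set set \<Rightarrow> 'a set set" where
  "dual_bases E Bs = (\<lambda>B. E - B) ` Bs"

definition indep :: "'a set set \<Rightarrow> 'a set \<Rightarrow> bool" where
  "indep Bs I \<longleftrightarrow> (\<exists>B\<in>Bs. I \<subseteq> B)"

definition circuit :: "'a set \<Rightarrow> 'a set set \<Rightarrow> 'a set \<Rightarrow> bool" where
  "circuit E Bs C \<longleftrightarrow> C \<subseteq> E \<and> \<not> indep Bs C \<and> (\<forall>x\<in>C. indep Bs (C - {x}))"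

definition conn_rel :: "'a set \<Rightarrow> 'a set set \<Rightarrow> ('a \<times> 'a) set" where
  "conn_rel E Bs = {(x, y). x \<in> E \<and> y \<in> E \<and>
      (x = y \<or> (\<exists>C. circuit E Bs C \<and> x \<in> C \<and> y \<in> C))}"

definition num_components :: "'a set \<Rightarrow> 'a set set \<Rightarrow> nat" where
  "num_components E Bs = card (E // conn_rel E Bs)"

definition basis_dist :: "'a set \<Rightarrow> 'a set \<Rightarrow> nat" where
  "basis_dist B B' = card ((B - B') \<union> (B' - B))"

definition diam :: "'a set set \<Rightarrow> nat" where
  "diam S = Max {basis_dist B B' | B B'. B \<in> S \<and> B' \<in> S}"

definition borsuk_number :: "'a set set \<Rightarrow> enat" where
  "borsuk_number Bs = (if card Bs \<le> 1 then \<infinity> else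
     enat (LEAST k. \<exists>P. partition_on Bs P \<and> card P = k \<and>
                        (\<forall>S\<in>P. diam S < diam Bs)))"

definition borsuk_property :: "'a set \<Rightarrow> 'a set set \<Rightarrow> bool" where
  "borsuk_property E Bs \<longleftrightarrow>
     borsuk_number Bs \<le> enat (card E - num_components E Bs + 1)"

end

(*
  If B1 and B2 are disjoint bases of rank r, the basis family has diameter 2r, while two bases
  sharing an element are at distance at most 2(r - 1).  Fix e in B1 and let D consist of e and
  all f with B1 - e + f a basis.  Every basis contains e or, by exchange against B1, such an f;
  grouping the bases by a common element of D therefore partitions them into at most |D| parts
  of smaller diameter.  The fundamental circuit of f with respect to B1 contains e, so D lies in
  one connected component, and the c components number at most n - |D| + 1.

  The dual case is the same argument with complements: if B1 and B2 cover E, two bases missing a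
  common element are closer than B1 and B2, and the dual exchange property (for e in B - B1 some
  f in B1 - B makes B1 - f + e a basis) shows that every basis misses an element of the set D
  of e and all f with B1 - f + e a basis.
*)
theory Submission
  imports Defs
begin

lemma card_insert_remove:
  assumes "finite B" "x \<in> B" "y \<notin> B"
  shows "card (insert y (B - {x})) = card B"
proof -
  have "card B > 0"
    using assms card_gt_0_iff by blast
  then show ?thesis
    using assms by (simp add: card_Diff_singleton)
qed

lemma indep_subset: "indep Bs I \<Longrightarrow> J \<subseteq> I \<Longrightarrow> indep Bs J"
  unfolding indep_def by blast

lemma circuit_eq_if_subset:
  assumes "circuit E Bs C1" "circuit E Bs C2" "C1 \<subseteq> C2"
  shows "C1 = C2"
proof (rule ccontr)
  assume "C1 \<noteq> C2"
  then obtain x where "x \<in> C2" "C1 \<subseteq> C2 - {x}"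
    using assms(3) by blast
  then show False
    using assms(1,2) indep_subset unfolding circuit_def by blast
qed

lemma basis_dist_le_diam:
  assumes "finite S" "B \<in> S" "B' \<in> S"
  shows "basis_dist B B' \<le> diam S"
proof -
  have "finite {basis_dist B B' | B B'. B \<in> S \<and> B' \<in> S}"
    using finite_image_set2[of "\<lambda>B. B \<in> S" "\<lambda>B. B \<in> S" basis_dist] assms(1) by simp
  then show ?thesis
    unfolding diam_def using assms by (auto intro: Max_ge)
qed

lemma diam_less:
  assumes "finite S" "S \<noteq> {}" "\<And>B B'. B \<in> S \<Longrightarrow> B' \<in> S \<Longrightarrow> basis_dist B B' < k"
  shows "diam S < k"
proof -
  let ?dists = "{basis_dist B B' | B B'. B \<in> S \<and> B' \<in> S}"
  have "finite ?dists"
    using finite_image_set2[of "\<lambda>B. B \<in> S" "\<lambda>B. B \<in> S" basis_dist] assms(1) by simp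
  moreover have "?dists \<noteq> {}"
    using assms(2) by blast
  ultimately show ?thesis
    unfolding diam_def using assms(3) by (auto simp: Max_less_iff)
qed

lemma borsuk_number_le_card_cover:
  assumes "finite Bs" "B1 \<in> Bs" "B2 \<in> Bs" "finite D"
    and cover: "\<And>B. B \<in> Bs \<Longrightarrow> \<exists>d\<in>D. Q d B"
    and close: "\<And>d B B'. B \<in> Bs \<Longrightarrow> B' \<in> Bs \<Longrightarrow> Q d B \<Longrightarrow> Q d B' \<Longrightarrow>
                  basis_dist B B' < basis_dist B1 B2"
  shows "borsuk_number Bs \<le> enat (card D)"
proof -
  define g where "g B = (SOME d. d \<in> D \<and> Q d B)" for B
  have g: "g B \<in> D" "Q (g B) B" if "B \<in> Bs" for B
    using someI_ex[OF cover[OF that, unfolded Bex_def]] unfolding g_def by blast+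
  have "basis_dist B1 B1 < basis_dist B1 B2"
    using close g(2) assms(2) by blast
  then have "B1 \<noteq> B2"
    by auto
  then have two_bases: "\<not> card Bs \<le> 1"
    using assms(1-3) card_le_Suc0_iff_eq by auto
  define P where "P = (\<lambda>d. {B \<in> Bs. g B = d}) ` g ` Bs"
  have "partition_on Bs P"
    by (rule partition_onI) (auto simp: P_def disjnt_def)
  moreover have "card P \<le> card D"
  proof -
    have "card P \<le> card (g ` Bs)"
      unfolding P_def using card_image_le assms(1) by blast
    also have "\<dots> \<le> card D"
      using g(1) by (intro card_mono assms(4)) blast
    finally show ?thesis .
  qed
  moreover have "diam S < diam Bs" if part: "S \<in> P" for S
  proof -
    obtain B0 where "B0 \<in> Bs" and S: "S = {B \<in> Bs. g B = g B0}"
      using part unfolding P_def by blast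
    have "basis_dist B B' < basis_dist B1 B2" if "B \<in> S" "B' \<in> S" for B B'
    proof -
      have "B \<in> Bs" "B' \<in> Bs" "g B = g B0" "g B' = g B0"
        using that S by auto
      then show ?thesis
        using close g(2) by metis
    qed
    moreover have "finite S" "S \<noteq> {}"
      using S \<open>B0 \<in> Bs\<close> assms(1) by auto
    ultimately have "diam S < basis_dist B1 B2"
      by (intro diam_less)
    also have "\<dots> \<le> diam Bs"
      using basis_dist_le_diam assms(1-3) .
    finally show ?thesis .
  qed
  ultimately have "(LEAST k. \<exists>P. partition_on Bs P \<and> card P = k \<and> (\<forall>S\<in>P. diam S < diam Bs))
      \<le> card D"
    by (intro Least_le[THEN order_trans]) blast
  then show ?thesis
    unfolding borsuk_number_def using two_bases by simp
qed

lemma card_quotient_le: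
  assumes "equiv A r" "finite A" "D \<subseteq> r `` {e}" "D \<noteq> {}"
  shows "card (A // r) + card D \<le> card A + 1"
proof -
  have "D \<subseteq> A"
    using assms(1,3) equiv_type by blast
  have "r `` {d} = r `` {e}" if "d \<in> D" for d
    using equiv_class_eq[OF assms(1)] that assms(3) by blast
  then have "A // r \<subseteq> (\<lambda>x. r `` {x}) ` (A - D) \<union> {r `` {e}}"
    unfolding quotient_def by blast
  then have "card (A // r) \<le> card ((\<lambda>x. r `` {x}) ` (A - D) \<union> {r `` {e}})"
    using assms(2) by (intro card_mono) auto
  also have "\<dots> \<le> card ((\<lambda>x. r `` {x}) ` (A - D)) + 1"
    using card_Un_le[of _ "{r `` {e}}"] by simp
  also have "\<dots> \<le> card A - card D + 1"
    using card_image_le[of "A - D"] card_Diff_subset[OF _ \<open>D \<subseteq> A\<close>] assms(2) \<open>D \<subseteq> A\<close>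
    by (simp add: finite_subset)
  finally show ?thesis
    using card_mono[OF assms(2) \<open>D \<subseteq> A\<close>] by linarith
qed

locale matroid_bases =
  fixes E :: "'a set" and Bs :: "'a set set"
  assumes matroid: "matroid E Bs"
begin

lemma finite_ground: "finite E"
  using matroid unfolding matroid_def by blast

lemma basis_subset_ground: "B \<in> Bs \<Longrightarrow> B \<subseteq> E"
  using matroid unfolding matroid_def by blast

lemma basis_exchange:
  "B1 \<in> Bs \<Longrightarrow> B2 \<in> Bs \<Longrightarrow> x \<in> B1 - B2 \<Longrightarrow> \<exists>y\<in>B2 - B1. insert y (B1 - {x}) \<in> Bs"
  using matroid unfolding matroid_def by blast

lemma finite_basis: "B \<in> Bs \<Longrightarrow> finite B"
  using basis_subset_ground finite_ground finite_subset by blast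

lemma finite_bases: "finite Bs"
  using finite_subset[of Bs "Pow E"] basis_subset_ground finite_ground by blast

lemma bases_card_eq:
  assumes "B1 \<in> Bs" "B2 \<in> Bs"
  shows "card B1 = card B2"
  using assms(1)
proof (induction "card (B1 - B2)" arbitrary: B1)
  case 0
  then have "B1 \<subseteq> B2"
    using finite_basis by auto
  moreover have "B2 \<subseteq> B1"
    using basis_exchange[OF assms(2) \<open>B1 \<in> Bs\<close>] calculation by blast
  ultimately show ?case
    by simp
next
  case (Suc n)
  obtain x where x: "x \<in> B1 - B2"
    using Suc.hyps(2) by (metis card.empty ex_in_conv nat.distinct(1))
  obtain y where y: "y \<in> B2 - B1" "insert y (B1 - {x}) \<in> Bs"
    using basis_exchange[OF Suc.prems assms(2) x] by blast
  have "insert y (B1 - {x}) - B2 = (B1 - B2) - {x}"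
    using y by blast
  then have "n = card (insert y (B1 - {x}) - B2)"
    using Suc.hyps(2) x finite_basis[OF Suc.prems] by simp
  then have "card (insert y (B1 - {x})) = card B2"
    using Suc.hyps(1) y(2) by blast
  then show ?case
    using card_insert_remove[OF finite_basis[OF Suc.prems]] x y by simp
qed

lemma card_Diff_bases_commute:
  assumes "B1 \<in> Bs" "B2 \<in> Bs"
  shows "card (B1 - B2) = card (B2 - B1)"
proof -
  have "card (B1 - B2) = card B1 - card (B1 \<inter> B2)"
    using finite_basis[OF assms(1)] by (simp add: card_Diff_subset_Int)
  moreover have "card (B2 - B1) = card B2 - card (B1 \<inter> B2)"
    using finite_basis[OF assms(2)] by (simp add: card_Diff_subset_Int Int_commute)
  ultimately show ?thesis
    using bases_card_eq[OF assms] by simp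
qed

lemma basis_dist_bases:
  assumes "B1 \<in> Bs" "B2 \<in> Bs"
  shows "basis_dist B1 B2 = 2 * card (B1 - B2)"
proof -
  have "basis_dist B1 B2 = card (B1 - B2) + card (B2 - B1)"
    unfolding basis_dist_def using finite_basis assms by (intro card_Un_disjoint) auto
  then show ?thesis
    using card_Diff_bases_commute[OF assms] by simp
qed

lemma bases_diff_nonempty:
  assumes "B1 \<in> Bs" "B2 \<in> Bs" "B1 \<noteq> B2"
  shows "B1 - B2 \<noteq> {}"
proof
  assume "B1 - B2 = {}"
  then have "card (B2 - B1) = 0"
    using card_Diff_bases_commute[OF assms(1,2)] by (metis card.empty)
  then have "B2 - B1 = {}"
    using finite_basis[OF assms(2)] by simp
  with \<open>B1 - B2 = {}\<close> show False
    using assms(3) by blast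
qed

lemma basis_dist_less_if_common_element:
  assumes "B1 \<in> Bs" "B2 \<in> Bs" "B1 \<inter> B2 = {}"
    and "B \<in> Bs" "B' \<in> Bs" "d \<in> B" "d \<in> B'"
  shows "basis_dist B B' < basis_dist B1 B2"
proof -
  have "card (B - B') < card B"
    using assms(6,7) finite_basis[OF assms(4)] by (intro psubset_card_mono) auto
  also have "\<dots> = card (B1 - B2)"
    using bases_card_eq[OF assms(4,1)] assms(3) by (simp add: Diff_triv)
  finally show ?thesis
    using basis_dist_bases assms by simp
qed

lemma basis_dist_less_if_common_nonelement:
  assumes "B1 \<in> Bs" "B2 \<in> Bs" "B1 \<union> B2 = E"
    and "B \<in> Bs" "B' \<in> Bs" "d \<in> E - B" "d \<in> E - B'"
  shows "basis_dist B B' < basis_dist B1 B2"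
proof -
  have "card (B - B') < card (E - B')"
    using assms(6,7) basis_subset_ground[OF assms(4)] finite_ground
    by (intro psubset_card_mono) auto
  also have "\<dots> = card (E - B2)"
    using bases_card_eq[OF assms(5,2)] finite_basis basis_subset_ground assms(2,5)
    by (simp add: card_Diff_subset)
  also have "E - B2 = B1 - B2"
    using assms(3) by blast
  finally show ?thesis
    using basis_dist_bases assms by simp
qed

lemma indep_card_le:
  assumes "indep Bs I" "B \<in> Bs"
  shows "card I \<le> card B"
proof -
  obtain B' where "B' \<in> Bs" "I \<subseteq> B'"
    using assms(1) unfolding indep_def by blast
  then have "card I \<le> card B'"
    using card_mono finite_basis by blast
  then show ?thesis
    using bases_card_eq[OF \<open>B' \<in> Bs\<close> assms(2)] by simp
qed

lemma indep_extend:
  assumes "indep Bs I" "B \<in> Bs"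
  shows "\<exists>B'\<in>Bs. I \<subseteq> B' \<and> B' \<subseteq> I \<union> B"
proof -
  obtain B0 where "B0 \<in> Bs" "I \<subseteq> B0"
    using assms(1) unfolding indep_def by blast
  then show ?thesis
  proof (induction "card (B0 - (I \<union> B))" arbitrary: B0)
    case 0
    then have "B0 \<subseteq> I \<union> B"
      using finite_basis by auto
    then show ?case
      using 0 by blast
  next
    case (Suc n)
    obtain x where x: "x \<in> B0 - (I \<union> B)"
      using Suc.hyps(2) by (metis card.empty ex_in_conv nat.distinct(1))
    obtain y where y: "y \<in> B - B0" "insert y (B0 - {x}) \<in> Bs"
      using basis_exchange[OF Suc.prems(1) assms(2)] x by blast
    have "insert y (B0 - {x}) - (I \<union> B) = (B0 - (I \<union> B)) - {x}"
      using y by blast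
    then have "n = card (insert y (B0 - {x}) - (I \<union> B))"
      using Suc.hyps(2) x finite_basis[OF Suc.prems(1)] by simp
    moreover have "I \<subseteq> insert y (B0 - {x})"
      using Suc.prems(2) x by blast
    ultimately show ?case
      using Suc.hyps(1) y(2) by blast
  qed
qed

lemma dependent_contains_circuit:
  assumes "X \<subseteq> E" "\<not> indep Bs X"
  shows "\<exists>C\<subseteq>X. circuit E Bs C"
proof -
  let ?dependent = "{Y. Y \<subseteq> X \<and> \<not> indep Bs Y}"
  have "finite (Pow X)"
    using finite_subset[OF assms(1) finite_ground] by simp
  then have "finite ?dependent"
    by (rule finite_subset[rotated]) blast
  moreover have "X \<in> ?dependent"
    using assms(2) by blast
  ultimately obtain C where C: "C \<in> ?dependent"
    and minimal: "\<forall>Y\<in>?dependent. Y \<le> C \<longrightarrow> C = Y"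
    using finite_has_minimal2[of ?dependent X] by blast
  have "indep Bs (C - {x})" if "x \<in> C" for x
  proof (rule ccontr)
    assume "\<not> indep Bs (C - {x})"
    then have "C - {x} \<in> ?dependent"
      using C by blast
    then have "C = C - {x}"
      using minimal by blast
    then show False
      using that by blast
  qed
  then show ?thesis
    using C assms(1) unfolding circuit_def by blast
qed

lemma basis_exchange_circuit:
  assumes B: "B \<in> Bs" and "e \<notin> B" and C: "circuit E Bs C" "C \<subseteq> insert e B"
    and "f \<in> C" "f \<noteq> e"
  shows "insert e (B - {f}) \<in> Bs"
proof -
  have "indep Bs (C - {f})"
    using C(1) \<open>f \<in> C\<close> unfolding circuit_def by blast
  then obtain B' where B': "B' \<in> Bs" "C - {f} \<subseteq> B'" "B' \<subseteq> (C - {f}) \<union> B"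
    using indep_extend B by blast
  have "f \<notin> B'"
  proof
    assume "f \<in> B'"
    then have "C \<subseteq> B'"
      using B'(2) by blast
    then show False
      using B'(1) C(1) unfolding circuit_def indep_def by blast
  qed
  then have "B' \<subseteq> insert e (B - {f})"
    using B'(3) C(2) by blast
  moreover have "card B' = card (insert e (B - {f}))"
  proof -
    have "f \<in> B"
      using C(2) \<open>f \<in> C\<close> \<open>f \<noteq> e\<close> by blast
    then show ?thesis
      using card_insert_remove[OF finite_basis[OF B]] \<open>e \<notin> B\<close> bases_card_eq[OF B'(1) B] by simp
  qed
  moreover have "finite (insert e (B - {f}))"
    using finite_basis[OF B] by simp
  ultimately have "B' = insert e (B - {f})"
    using card_subset_eq by blast
  then show ?thesis
    using B'(1) by simp
qed

lemma fundamental_circuit: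
  assumes "B \<in> Bs" "y \<in> E" "y \<notin> B"
  obtains C where "circuit E Bs C" "C \<subseteq> insert y B" "y \<in> C"
proof -
  have "\<not> indep Bs (insert y B)"
  proof
    assume "indep Bs (insert y B)"
    then have "card (insert y B) \<le> card B"
      using indep_card_le[OF _ assms(1)] by blast
    then show False
      using finite_basis[OF assms(1)] assms(3) by simp
  qed
  then obtain C where C: "C \<subseteq> insert y B" "circuit E Bs C"
    using dependent_contains_circuit basis_subset_ground[OF assms(1)] assms(2) by blast
  moreover have "y \<in> C"
    using C assms(1) unfolding circuit_def indep_def by blast
  ultimately show ?thesis
    using that by blast
qed

lemma basis_exchange_dual:
  assumes "B1 \<in> Bs" "B2 \<in> Bs" "x \<in> B2 - B1"
  shows "\<exists>y\<in>B1 - B2. insert x (B1 - {y}) \<in> Bs"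
proof -
  obtain C where C: "circuit E Bs C" "C \<subseteq> insert x B1" "x \<in> C"
    using fundamental_circuit assms basis_subset_ground by blast
  then obtain y where "y \<in> C" "y \<notin> B2"
    using assms(2) unfolding circuit_def indep_def by blast
  then show ?thesis
    using basis_exchange_circuit[OF assms(1) _ C(1,2)] C assms(3) by blast
qed

lemma circuit_elimination:
  assumes C1: "circuit E Bs C1" and C2: "circuit E Bs C2" and "C1 \<noteq> C2" "e \<in> C1 \<inter> C2"
  shows "\<exists>C. circuit E Bs C \<and> C \<subseteq> C1 \<union> C2 - {e}"
proof -
  have "\<not> indep Bs (C1 \<union> C2 - {e})"
  proof
    assume "indep Bs (C1 \<union> C2 - {e})"
    then obtain B where B: "B \<in> Bs" "C1 \<union> C2 - {e} \<subseteq> B"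
      unfolding indep_def by blast
    have "e \<notin> B"
      using B C1 \<open>e \<in> C1 \<inter> C2\<close> unfolding circuit_def indep_def by blast
    obtain f where f: "f \<in> C1" "f \<notin> C2"
      using circuit_eq_if_subset[OF C1 C2] \<open>C1 \<noteq> C2\<close> by blast
    then have "insert e (B - {f}) \<in> Bs"
      using basis_exchange_circuit[OF B(1) \<open>e \<notin> B\<close> C1] B \<open>e \<in> C1 \<inter> C2\<close> by blast
    moreover have "C2 \<subseteq> insert e (B - {f})"
      using B f by blast
    ultimately show False
      using C2 unfolding circuit_def indep_def by blast
  qed
  moreover have "C1 \<union> C2 - {e} \<subseteq> E"
    using C1 C2 unfolding circuit_def by blast
  ultimately show ?thesis
    using dependent_contains_circuit by blast
qed

lemma finite_circuit: "circuit E Bs C \<Longrightarrow> finite C"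
  unfolding circuit_def using finite_ground finite_subset by blast

lemma circuit_not_subset:
  assumes "circuit E Bs C" "circuit E Bs C'" "y \<in> C'" "y \<notin> C"
  obtains g where "g \<in> C" "g \<notin> C'"
  using circuit_eq_if_subset[OF assms(1,2)] assms(3,4) that by blast

lemma strong_circuit_elimination:
  assumes "circuit E Bs C1" "circuit E Bs C2" "e \<in> C1 \<inter> C2" "f \<in> C1 - C2"
  shows "\<exists>C. circuit E Bs C \<and> f \<in> C \<and> C \<subseteq> C1 \<union> C2 - {e}"
  using assms
proof (induction "card (C1 \<union> C2)" arbitrary: C1 C2 e f rule: less_induct)
  case less
  have finite: "finite (C1 \<union> C2)"
    using finite_circuit less.prems(1,2) by blast
  obtain C3 where C3: "circuit E Bs C3" "C3 \<subseteq> C1 \<union> C2 - {e}"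
    using circuit_elimination less.prems by blast
  show ?case
  proof (cases "f \<in> C3")
    case True
    then show ?thesis
      using C3 by blast
  next
    case False
    obtain g where g: "g \<in> C3" "g \<notin> C1"
      using circuit_not_subset[OF C3(1) less.prems(1)] C3(2) less.prems(3) by blast
    have "card (C2 \<union> C3) < card (C1 \<union> C2)"
      using C3(2) False less.prems(4) by (intro psubset_card_mono finite) blast
    then obtain C4 where C4: "circuit E Bs C4" "e \<in> C4" "C4 \<subseteq> C2 \<union> C3 - {g}"
      using less.hyps[of C2 C3 g e] less.prems(2,3) C3 g by blast
    have "card (C1 \<union> C4) < card (C1 \<union> C2)"
      using C3(2) C4(3) g by (intro psubset_card_mono finite) blast
    then obtain C5 where "circuit E Bs C5" "f \<in> C5" "C5 \<subseteq> C1 \<union> C4 - {e}"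
      using less.hyps[of C1 C4 e f] less.prems(1,3,4) C4 False by blast
    then show ?thesis
      using C3(2) C4(3) by blast
  qed
qed

lemma intersecting_circuits_common_circuit:
  assumes "circuit E Bs C1" "circuit E Bs C2" "C1 \<inter> C2 \<noteq> {}" "x \<in> C1" "z \<in> C2"
  shows "\<exists>C. circuit E Bs C \<and> x \<in> C \<and> z \<in> C"
  using assms
proof (induction "card (C1 \<union> C2)" arbitrary: C1 C2 x z rule: less_induct)
  case less
  show ?case
  proof (cases "x \<in> C2 \<or> z \<in> C1")
    case True
    then show ?thesis
      using less.prems by blast
  next
    case False
    have finite: "finite (C1 \<union> C2)"
      using finite_circuit less.prems(1,2) by blast
    obtain y where y: "y \<in> C1 \<inter> C2"
      using less.prems(3) by blast
    obtain C3 where C3: "circuit E Bs C3" "x \<in> C3" "C3 \<subseteq> C1 \<union> C2 - {y}"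
      using strong_circuit_elimination[OF less.prems(1,2) y] less.prems(4) False by blast
    obtain C4 where C4: "circuit E Bs C4" "z \<in> C4" "C4 \<subseteq> C1 \<union> C2 - {y}"
      using strong_circuit_elimination[OF less.prems(2,1)] y less.prems(5) False by blast
    show ?thesis
    proof (cases "C3 \<inter> C4 = {}")
      case False
      have "card (C3 \<union> C4) < card (C1 \<union> C2)"
        using C3(3) C4(3) y by (intro psubset_card_mono finite) blast
      then show ?thesis
        using less.hyps C3 C4 False by blast
    next
      case True
      \<comment> \<open>an element g of C3 - C1 then lies in C2 but not in C1 \<union> C4\<close>
      obtain g where g: "g \<in> C3" "g \<notin> C1"
        using circuit_not_subset[OF C3(1) less.prems(1)] C3(3) y by blast
      obtain h where h: "h \<in> C4" "h \<notin> C2"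
        using circuit_not_subset[OF C4(1) less.prems(2)] C4(3) y by blast
      have "card (C1 \<union> C4) < card (C1 \<union> C2)"
        using C3(3) C4(3) g True by (intro psubset_card_mono finite) blast
      moreover have "C1 \<inter> C4 \<noteq> {}"
        using C4(3) h by blast
      ultimately show ?thesis
        using less.hyps less.prems(1,4) C4(1,2) by blast
    qed
  qed
qed

lemma equiv_conn_rel: "equiv E (conn_rel E Bs)"
proof (rule equivI)
  show "trans (conn_rel E Bs)"
  proof (rule transI)
    fix x y z
    assume "(x, y) \<in> conn_rel E Bs" "(y, z) \<in> conn_rel E Bs"
    then show "(x, z) \<in> conn_rel E Bs"
      unfolding conn_rel_def using intersecting_circuits_common_circuit by blast
  qed
qed (auto simp: conn_rel_def refl_on_def sym_def)

lemma conn_rel_exchange: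
  assumes "B \<in> Bs" "x \<in> B" "y \<in> E" "y \<notin> B" "insert y (B - {x}) \<in> Bs"
  shows "(x, y) \<in> conn_rel E Bs"
proof -
  obtain C where C: "circuit E Bs C" "C \<subseteq> insert y B" "y \<in> C"
    using fundamental_circuit assms(1,3,4) by blast
  have "x \<in> C"
  proof (rule ccontr)
    assume "x \<notin> C"
    then have "C \<subseteq> insert y (B - {x})"
      using C(2) by blast
    then show False
      using C(1) assms(5) unfolding circuit_def indep_def by blast
  qed
  then show ?thesis
    unfolding conn_rel_def using C assms basis_subset_ground by blast
qed

lemma borsuk_property_if_connected_cover:
  assumes "D \<subseteq> conn_rel E Bs `` {e}" "e \<in> D" "borsuk_number Bs \<le> enat (card D)"
  shows "borsuk_property E Bs"
proof -
  have "card (E // conn_rel E Bs) + card D \<le> card E + 1"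
    using card_quotient_le[OF equiv_conn_rel finite_ground assms(1)] assms(2) by blast
  moreover have "card D > 0"
  proof -
    have "D \<subseteq> E"
      using assms(1) equiv_type[OF equiv_conn_rel] by blast
    then show ?thesis
      using finite_subset[OF _ finite_ground] assms(2) card_gt_0_iff by blast
  qed
  ultimately have "card D \<le> card E - num_components E Bs + 1"
    unfolding num_components_def by linarith
  then show ?thesis
    unfolding borsuk_property_def using assms(3) order_trans by fastforce
qed

lemma borsuk_property_if_disjoint_bases:
  assumes "B1 \<in> Bs" "B2 \<in> Bs" "B1 \<noteq> B2" "B1 \<inter> B2 = {}"
  shows "borsuk_property E Bs"
proof -
  obtain e where e: "e \<in> B1"
    using bases_diff_nonempty[OF assms(1-3)] by blast
  define D where "D = insert e {f \<in> E - B1. insert f (B1 - {e}) \<in> Bs}"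
  have "D \<subseteq> E"
    using e basis_subset_ground[OF assms(1)] unfolding D_def by blast
  have cover: "\<exists>d\<in>D. d \<in> B" if B: "B \<in> Bs" for B
  proof (cases "e \<in> B")
    case False
    then obtain f where "f \<in> B - B1" "insert f (B1 - {e}) \<in> Bs"
      using basis_exchange[OF assms(1) B] e by blast
    then show ?thesis
      using basis_subset_ground[OF B] unfolding D_def by blast
  qed (auto simp: D_def)
  have "borsuk_number Bs \<le> enat (card D)"
    using finite_bases assms(1,2) finite_subset[OF \<open>D \<subseteq> E\<close> finite_ground] cover
      basis_dist_less_if_common_element[OF assms(1,2,4)]
    by (rule borsuk_number_le_card_cover[where Q = "\<lambda>d B. d \<in> B"])
  moreover have "D \<subseteq> conn_rel E Bs `` {e}"
    using conn_rel_exchange[OF assms(1) e] e basis_subset_ground[OF assms(1)]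
    unfolding D_def by (auto simp: conn_rel_def)
  ultimately show ?thesis
    using borsuk_property_if_connected_cover unfolding D_def by blast
qed

lemma borsuk_property_if_bases_cover_ground:
  assumes "B1 \<in> Bs" "B2 \<in> Bs" "B1 \<noteq> B2" "B1 \<union> B2 = E"
  shows "borsuk_property E Bs"
proof -
  obtain e where e: "e \<in> B2" "e \<notin> B1"
    using bases_diff_nonempty[OF assms(2,1)] assms(3) by blast
  define D where "D = insert e {f \<in> B1. insert e (B1 - {f}) \<in> Bs}"
  have "D \<subseteq> E"
    using e assms(4) unfolding D_def by blast
  have cover: "\<exists>d\<in>D. d \<in> E - B" if B: "B \<in> Bs" for B
  proof (cases "e \<in> B")
    case True
    then obtain f where "f \<in> B1 - B" "insert e (B1 - {f}) \<in> Bs"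
      using basis_exchange_dual[OF assms(1) B] e by blast
    then show ?thesis
      using \<open>D \<subseteq> E\<close> unfolding D_def by blast
  qed (use \<open>D \<subseteq> E\<close> in \<open>auto simp: D_def\<close>)
  have "borsuk_number Bs \<le> enat (card D)"
    using finite_bases assms(1,2) finite_subset[OF \<open>D \<subseteq> E\<close> finite_ground] cover
      basis_dist_less_if_common_nonelement[OF assms(1,2,4)]
    by (rule borsuk_number_le_card_cover[where Q = "\<lambda>d B. d \<in> E - B"])
  moreover have "D \<subseteq> conn_rel E Bs `` {e}"
  proof -
    have "(f, e) \<in> conn_rel E Bs" if "f \<in> D" for f
      using that conn_rel_exchange[OF assms(1) _ _ e(2)] e assms(4) unfolding D_def
      by (auto simp: conn_rel_def)
    then show ?thesis
      using equiv_conn_rel unfolding equiv_def sym_def by blast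
  qed
  ultimately show ?thesis
    using borsuk_property_if_connected_cover unfolding D_def by blast
qed

end

theorem theorem1:
  fixes E :: "'a set" and Bs :: "'a set set"
  assumes "matroid E Bs"
    and "(\<exists>B1\<in>Bs. \<exists>B2\<in>Bs. B1 \<noteq> B2 \<and> B1 \<inter> B2 = {}) \<or>
         (\<exists>B1\<in>dual_bases E Bs. \<exists>B2\<in>dual_bases E Bs. B1 \<noteq> B2 \<and> B1 \<inter> B2 = {})"
  shows "borsuk_property E Bs"
proof -
  interpret matroid_bases E Bs
    by (rule matroid_bases.intro) fact
  from assms(2) show ?thesis
  proof (elim disjE bexE conjE)
    fix B1 B2
    assume "B1 \<in> Bs" "B2 \<in> Bs" "B1 \<noteq> B2" "B1 \<inter> B2 = {}"
    then show ?thesis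
      by (rule borsuk_property_if_disjoint_bases)
  next
    fix A1 A2
    assume "A1 \<in> dual_bases E Bs" "A2 \<in> dual_bases E Bs" "A1 \<noteq> A2" "A1 \<inter> A2 = {}"
    then obtain B1 B2 where "B1 \<in> Bs" "B2 \<in> Bs" "B1 \<noteq> B2" "B1 \<union> B2 = E"
      unfolding dual_bases_def using basis_subset_ground by blast
    then show ?thesis
      by (rule borsuk_property_if_bases_cover_ground)
  qed
qed

end
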